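(* Let $B=\bigoplus_{i\in\mathbb{Z}}B_i$ be a $\mathbb{Z}$-graded noetherian integral domain with $e(B)=1$, and suppose $B=B_0[x_1,\dots,x_n]$ with $n\ge2$, where each $x_i\neq0$ is homogeneous of degree $d_i\in\mathbb{Z}\setminus\{0\}$. Let $e_i=\gcd(d_1,\dots,\widehat{d_i},\dots,d_n)$ for $1\le i\le n$; let $U=\{i: 1\le i\le n,\ x_i \text{ is a unit of } B\}$ and $U^c=\{1,\dots,n\}\setminus U$; let $E$ be the set of prime factors of $\prod_{i\in U^c}e_i$ ($E=\emptyset$ if $U^c=\emptyset$). Then: (a) $E\subseteq\Pi(B)$; (b) if $U\neq\emptyset$, then every element of $\Pi(B)$ is a prime factor of $\gcd\{d_i: i\in U\}$; (c) if no height-$1$ prime ideal of $B$ contains $\bigcup_{i\in\mathbb{Z}\setminus\{0\}}B_i$, then every element of $\Pi(B)$ is a prime factor of $d_1\cdots d_n$; (d) if for every pair of distinct $i,j\in\{1,\dots,n\}$ no height-$1$ prime ideal of $B$ contains $\{x_i,x_j\}$, then $\Pi(B)=E$.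
   Context: For a $\mathbb{Z}$-graded domain $C$, $e(C)=\gcd\{i\in\mathbb{Z}:C_i\neq0\}$. $\Pi(B)$ is the set of primes $p$ with $p\mid e(B/\mathfrak{p})$ for some homogeneous height-$1$ prime ideal $\mathfrak{p}$ of $B$. *)

theory Defs
  imports Main "HOL-Computational_Algebra.Primes"
begin

definition is_ideal :: "'a::comm_ring_1 set \<Rightarrow> bool" where
  "is_ideal I \<longleftrightarrow> 0 \<in> I \<and> (\<forall>a\<in>I. \<forall>b\<in>I. a + b \<in> I) \<and> (\<forall>r. \<forall>a\<in>I. r * a \<in> I)"

definition is_prime_ideal :: "'a::comm_ring_1 set \<Rightarrow> bool" where
  "is_prime_ideal P \<longleftrightarrow> is_ideal P \<and> P \<noteq> UNIV \<and> (\<forall>a b. a * b \<in> P \<longrightarrow> a \<in> P \<or> b \<in> P)"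

definition noetherian_ring :: "'a::comm_ring_1 itself \<Rightarrow> bool" where
  "noetherian_ring _ \<longleftrightarrow>
     (\<forall>I :: nat \<Rightarrow> 'a set. (\<forall>k. is_ideal (I k)) \<and> (\<forall>k. I k \<subseteq> I (Suc k))
        \<longrightarrow> (\<exists>N. \<forall>k\<ge>N. I k = I N))"

definition height_ge :: "'a::comm_ring_1 set \<Rightarrow> nat \<Rightarrow> bool" where
  "height_ge P k \<longleftrightarrow> (\<exists>Q :: nat \<Rightarrow> 'a set. Q k = P \<and> (\<forall>i\<le>k. is_prime_ideal (Q i))
                                   \<and> (\<forall>i<k. Q i \<subset> Q (Suc i)))"

definition height_one_prime :: "'a::comm_ring_1 set \<Rightarrow> bool" where
  "height_one_prime P \<longleftrightarrow> is_prime_ideal P \<and> height_ge P 1 \<and> \<not> height_ge P 2"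

inductive_set subring_gen :: "'a::comm_ring_1 set \<Rightarrow> 'a set" for S where
  gen: "a \<in> S \<Longrightarrow> a \<in> subring_gen S"
| zero: "0 \<in> subring_gen S"
| one: "1 \<in> subring_gen S"
| add: "a \<in> subring_gen S \<Longrightarrow> b \<in> subring_gen S \<Longrightarrow> a + b \<in> subring_gen S"
| neg: "a \<in> subring_gen S \<Longrightarrow> - a \<in> subring_gen S"
| mult: "a \<in> subring_gen S \<Longrightarrow> b \<in> subring_gen S \<Longrightarrow> a * b \<in> subring_gen S"

definition graded_decomp :: "(int \<Rightarrow> 'a::comm_ring_1 set) \<Rightarrow> 'a \<Rightarrow> (int \<Rightarrow> 'a) \<Rightarrow> bool" where
  "graded_decomp G b f \<longleftrightarrow> (\<forall>i. f i \<in> G i) \<and> finite {i. f i \<noteq> 0} \<and> b = sum f {i. f i \<noteq> 0}"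

text \<open>\<open>B = \<Oplus>_{i\<in>\<int>} G i\<close> as a graded ring (the whole type is the ring B).\<close>
definition graded_ring :: "(int \<Rightarrow> 'a::comm_ring_1 set) \<Rightarrow> bool" where
  "graded_ring G \<longleftrightarrow>
     (\<forall>i. 0 \<in> G i \<and> (\<forall>a\<in>G i. \<forall>b\<in>G i. a + b \<in> G i) \<and> (\<forall>a\<in>G i. - a \<in> G i))
   \<and> (\<forall>i j. \<forall>a\<in>G i. \<forall>b\<in>G j. a * b \<in> G (i + j))
   \<and> (\<forall>b. \<exists>!f. graded_decomp G b f)"

definition homogeneous_ideal :: "(int \<Rightarrow> 'a::comm_ring_1 set) \<Rightarrow> 'a set \<Rightarrow> bool" where
  "homogeneous_ideal G P \<longleftrightarrow> is_ideal P \<and>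
     (\<forall>b\<in>P. \<forall>f. graded_decomp G b f \<longrightarrow> (\<forall>i. f i \<in> P))"

definition e_deg :: "(int \<Rightarrow> 'a::comm_ring_1 set) \<Rightarrow> int" where
  "e_deg G = Gcd {i. G i \<noteq> {0}}"

text \<open>For the quotient \<open>B/P\<close> of a homogeneous ideal, with induced grading
  \<open>(B/P)_i = (G i + P)/P\<close>, which is nonzero iff \<open>G i \<not>\<subseteq> P\<close>.\<close>
definition e_quot :: "(int \<Rightarrow> 'a::comm_ring_1 set) \<Rightarrow> 'a set \<Rightarrow> int" where
  "e_quot G P = Gcd {i. \<not> G i \<subseteq> P}"

definition Pi_set :: "(int \<Rightarrow> 'a::comm_ring_1 set) \<Rightarrow> nat set" where
  "Pi_set G = {p. prime p \<and> (\<exists>P. homogeneous_ideal G P \<and> height_one_prime P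
                                  \<and> int p dvd e_quot G P)}"

definition prime_factors_int :: "int \<Rightarrow> nat set" where
  "prime_factors_int m = {p. prime p \<and> int p dvd m}"

end

(*
  Let P be a prime of B and g = gcd {d_i : x_i not in P}.  Since B is generated over B_0 by
  the homogeneous x_i, every component of an element of B in a degree not divisible by g lies
  in P, while each d_i with x_i not in P is a degree in which B/P is nonzero; hence
  e(B/P) = g.  The assertions (b)-(d) follow by looking at which x_i a height one prime P can
  contain: never a unit; not all of them unless P contains every element of nonzero degree;
  under the hypothesis of (d) at most one, so that e(B/P) is e(B) = 1 or some e_i.
  For (a), a non-unit x_i lies in a minimal prime P over x_i.  This P is homogeneous, because
  its homogeneous core is again a prime containing x_i, and it has height one by Krull's
  principal ideal theorem; as x_i is in P, e_i divides e(B/P).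

  Krull's theorem is proved without constructing localizations: ideals saturated with respect
  to P stand in for ideals of B_P.  Noetherian induction shows that saturated ideals containing
  x satisfy the descending chain condition (B_P/xB_P is artinian), so the symbolic powers of a
  prime Q strictly inside P stabilize modulo x, and Nakayama's lemma forces Q = 0.
*)
theory Submission
  imports Defs "HOL-Library.Set_Algebras"
begin

section \<open>Ideals\<close>

lemma ideal_zero: "is_ideal I \<Longrightarrow> 0 \<in> I"
  by (simp add: is_ideal_def)

lemma ideal_add: "is_ideal I \<Longrightarrow> a \<in> I \<Longrightarrow> b \<in> I \<Longrightarrow> a + b \<in> I"
  by (simp add: is_ideal_def)

lemma ideal_mult_left: "is_ideal I \<Longrightarrow> a \<in> I \<Longrightarrow> r * a \<in> I"
  by (simp add: is_ideal_def)

lemma ideal_mult_right: "is_ideal I \<Longrightarrow> a \<in> I \<Longrightarrow> a * r \<in> I"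
  by (metis ideal_mult_left mult.commute)

lemma ideal_uminus: "is_ideal I \<Longrightarrow> a \<in> I \<Longrightarrow> - a \<in> I"
  using ideal_mult_left[of I a "- 1"] by simp

lemma ideal_diff: "is_ideal I \<Longrightarrow> a \<in> I \<Longrightarrow> b \<in> I \<Longrightarrow> a - b \<in> I"
  using ideal_add[of I a "- b"] ideal_uminus by fastforce

lemma ideal_sum: "is_ideal I \<Longrightarrow> (\<And>s. s \<in> S \<Longrightarrow> f s \<in> I) \<Longrightarrow> sum f S \<in> I"
  by (induction S rule: infinite_finite_induct) (auto simp: ideal_zero ideal_add)

lemma ideal_UNIV: "is_ideal UNIV"
  by (simp add: is_ideal_def)

lemma ideal_eq_UNIV_if_one: "is_ideal I \<Longrightarrow> 1 \<in> I \<Longrightarrow> I = UNIV"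
  using ideal_mult_left[of I 1] by auto

lemma ideal_Int: "is_ideal I \<Longrightarrow> is_ideal J \<Longrightarrow> is_ideal (I \<inter> J)"
  by (simp add: is_ideal_def)

lemma ideal_zero_set: "is_ideal {0}"
  by (simp add: is_ideal_def)

lemma ideal_set_plus:
  assumes "is_ideal A" "is_ideal B"
  shows "is_ideal (A + B)"
  unfolding is_ideal_def
proof (intro conjI ballI allI)
  show "0 \<in> A + B"
    using set_plus_intro[OF ideal_zero ideal_zero] assms by fastforce
next
  fix u v assume "u \<in> A + B" "v \<in> A + B"
  then obtain a b a' b' where "u = a + b" "v = a' + b'" "a \<in> A" "b \<in> B" "a' \<in> A" "b' \<in> B"
    by (auto elim!: set_plus_elim)
  then have "u + v = (a + a') + (b + b')" "a + a' \<in> A" "b + b' \<in> B"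
    using assms by (simp_all add: algebra_simps ideal_add)
  then show "u + v \<in> A + B" by auto
next
  fix r u assume "u \<in> A + B"
  then obtain a b where "u = a + b" "a \<in> A" "b \<in> B"
    by (auto elim!: set_plus_elim)
  then have "r * u = r * a + r * b" "r * a \<in> A" "r * b \<in> B"
    using assms by (simp_all add: distrib_left ideal_mult_left)
  then show "r * u \<in> A + B" by auto
qed

lemma set_plus_subset_left: "is_ideal B \<Longrightarrow> A \<subseteq> A + B"
  using set_zero_plus2[of B A] ideal_zero by (auto simp: add.commute)

lemma set_plus_subset_right: "is_ideal A \<Longrightarrow> B \<subseteq> A + B"
  using set_zero_plus2 ideal_zero by blast

lemma set_plus_least: "is_ideal I \<Longrightarrow> A \<subseteq> I \<Longrightarrow> B \<subseteq> I \<Longrightarrow> A + B \<subseteq> I"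
  by (auto elim!: set_plus_elim intro: ideal_add)

lemma ideal_set_times_singleton: "is_ideal J \<Longrightarrow> is_ideal (J * {m})"
  unfolding is_ideal_def set_times_def
  by (auto simp flip: distrib_right mult.assoc) (metis mult_zero_left)

inductive_set gen_ideal :: "'a::comm_ring_1 set \<Rightarrow> 'a set" for S where
  zero: "0 \<in> gen_ideal S"
| gen: "a \<in> S \<Longrightarrow> r * a \<in> gen_ideal S"
| add: "a \<in> gen_ideal S \<Longrightarrow> b \<in> gen_ideal S \<Longrightarrow> a + b \<in> gen_ideal S"

lemma gen_ideal_mult: "y \<in> gen_ideal S \<Longrightarrow> r * y \<in> gen_ideal S"
  by (induction y rule: gen_ideal.induct)
    (auto simp: distrib_left intro: gen_ideal.intros simp flip: mult.assoc)

lemma ideal_gen_ideal: "is_ideal (gen_ideal S)"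
  by (simp add: is_ideal_def gen_ideal.zero gen_ideal.add gen_ideal_mult)

lemma subset_gen_ideal: "S \<subseteq> gen_ideal S"
  using gen_ideal.gen[of _ S 1] by auto

lemma gen_ideal_least: "is_ideal I \<Longrightarrow> S \<subseteq> I \<Longrightarrow> gen_ideal S \<subseteq> I"
proof
  fix y assume I: "is_ideal I" "S \<subseteq> I" and y: "y \<in> gen_ideal S"
  from y show "y \<in> I"
    by (induction y rule: gen_ideal.induct) (use I in \<open>auto simp: ideal_zero ideal_add ideal_mult_left\<close>)
qed

lemma gen_ideal_mono: "S \<subseteq> T \<Longrightarrow> gen_ideal S \<subseteq> gen_ideal T"
  by (meson ideal_gen_ideal gen_ideal_least subset_gen_ideal order_trans)

lemma gen_ideal_empty: "gen_ideal {} = {0}"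
  using gen_ideal_least[OF ideal_zero_set, of "{}"] gen_ideal.zero by auto

lemma ideal_range_mult: "is_ideal (range (\<lambda>c. c * a))"
  unfolding is_ideal_def
proof (intro conjI ballI allI)
  show "0 \<in> range (\<lambda>c. c * a)" by (rule range_eqI[of _ _ 0]) simp
  show "u + v \<in> range (\<lambda>c. c * a)" if "u \<in> range (\<lambda>c. c * a)" "v \<in> range (\<lambda>c. c * a)" for u v
    using that by (auto simp flip: distrib_right)
  show "r * u \<in> range (\<lambda>c. c * a)" if "u \<in> range (\<lambda>c. c * a)" for r u
    using that by (auto simp flip: mult.assoc)
qed

lemma gen_ideal_insert: "gen_ideal (insert a S) = range (\<lambda>c. c * a) + gen_ideal S"
proof
  have ideal: "is_ideal (range (\<lambda>c. c * a) + gen_ideal S)"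
    by (rule ideal_set_plus[OF ideal_range_mult ideal_gen_ideal])
  have "1 * a + 0 \<in> range (\<lambda>c. c * a) + gen_ideal S"
    by (intro set_plus_intro rangeI gen_ideal.zero)
  moreover have "0 * a + s \<in> range (\<lambda>c. c * a) + gen_ideal S" if "s \<in> S" for s
    using that subset_gen_ideal by (intro set_plus_intro rangeI) blast
  ultimately have "insert a S \<subseteq> range (\<lambda>c. c * a) + gen_ideal S"
    by auto
  then show "gen_ideal (insert a S) \<subseteq> range (\<lambda>c. c * a) + gen_ideal S"
    by (rule gen_ideal_least[OF ideal])
  have "range (\<lambda>c. c * a) \<subseteq> gen_ideal (insert a S)"
    by (auto intro: gen_ideal.gen)
  moreover have "gen_ideal S \<subseteq> gen_ideal (insert a S)"
    by (rule gen_ideal_mono) blast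
  ultimately show "range (\<lambda>c. c * a) + gen_ideal S \<subseteq> gen_ideal (insert a S)"
    by (rule set_plus_least[OF ideal_gen_ideal])
qed

lemma gen_ideal_singleton: "gen_ideal {a} = range (\<lambda>c. c * a)"
  by (simp add: gen_ideal_insert gen_ideal_empty)

lemma gen_ideal_set_times_subset: "is_ideal B \<Longrightarrow> gen_ideal (A * B) \<subseteq> B"
  by (rule gen_ideal_least) (auto elim!: set_times_elim intro: ideal_mult_left)

fun ideal_power :: "'a::comm_ring_1 set \<Rightarrow> nat \<Rightarrow> 'a set" where
  "ideal_power Q 0 = UNIV"
| "ideal_power Q (Suc n) = gen_ideal (Q * ideal_power Q n)"

lemma ideal_ideal_power: "is_ideal (ideal_power Q n)"
  by (cases n) (simp_all add: ideal_UNIV ideal_gen_ideal)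

lemma ideal_power_Suc_subset: "ideal_power Q (Suc n) \<subseteq> ideal_power Q n"
  using gen_ideal_set_times_subset[OF ideal_ideal_power] by simp

lemma power_in_ideal_power: "a \<in> Q \<Longrightarrow> a ^ n \<in> ideal_power Q n"
  by (induction n) (auto intro: subset_gen_ideal[THEN subsetD])

lemma prime_ideal_is_ideal: "is_prime_ideal P \<Longrightarrow> is_ideal P"
  by (simp add: is_prime_ideal_def)

lemma prime_ideal_one: "is_prime_ideal P \<Longrightarrow> 1 \<notin> P"
  using ideal_eq_UNIV_if_one is_prime_ideal_def by blast

lemma prime_ideal_mult: "is_prime_ideal P \<Longrightarrow> a * b \<in> P \<Longrightarrow> a \<in> P \<or> b \<in> P"
  by (simp add: is_prime_ideal_def)

lemma prime_ideal_mult_notin: "is_prime_ideal P \<Longrightarrow> a \<notin> P \<Longrightarrow> b \<notin> P \<Longrightarrow> a * b \<notin> P"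
  using prime_ideal_mult by blast

lemma prime_ideal_unit: "is_prime_ideal P \<Longrightarrow> a dvd 1 \<Longrightarrow> a \<notin> P"
  by (metis dvdE ideal_mult_right prime_ideal_is_ideal prime_ideal_one)

lemma prime_ideal_zero: "is_prime_ideal {0::'a::idom}"
  unfolding is_prime_ideal_def using ideal_zero_set by (auto simp: set_eq_iff intro!: exI[of _ 1])

lemma prime_ideal_Inter_chain:
  assumes "C \<noteq> {}" and prime: "\<And>Q. Q \<in> C \<Longrightarrow> is_prime_ideal Q"
    and chain: "\<And>A B. A \<in> C \<Longrightarrow> B \<in> C \<Longrightarrow> A \<subseteq> B \<or> B \<subseteq> A"
  shows "is_prime_ideal (\<Inter>C)"
  unfolding is_prime_ideal_def
proof (intro conjI allI impI)
  show "is_ideal (\<Inter>C)"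
    using prime prime_ideal_is_ideal unfolding is_ideal_def by blast
  show "\<Inter>C \<noteq> UNIV"
    using \<open>C \<noteq> {}\<close> prime prime_ideal_one by blast
  fix a b assume ab: "a * b \<in> \<Inter>C"
  have "b \<in> \<Inter>C" if "a \<notin> \<Inter>C"
  proof -
    obtain Q1 where Q1: "Q1 \<in> C" "a \<notin> Q1" using \<open>a \<notin> \<Inter>C\<close> by blast
    have "b \<in> Q" if "Q \<in> C" for Q
    proof (cases "Q \<subseteq> Q1")
      case True
      then show ?thesis using Q1 ab that prime prime_ideal_mult by blast
    next
      case False
      then show ?thesis using Q1 ab that prime prime_ideal_mult chain by blast
    qed
    then show ?thesis by blast
  qed
  then show "a \<in> \<Inter>C \<or> b \<in> \<Inter>C" by blast
qed

section \<open>Localization at a prime through saturation\<close>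

text \<open>For a prime \<open>P\<close>, \<open>saturation P I\<close> is the contraction of the extension of \<open>I\<close> to the
  localization at \<open>P\<close>; it lets us argue in that localization without constructing it.\<close>

definition saturation :: "'a::comm_ring_1 set \<Rightarrow> 'a set \<Rightarrow> 'a set" where
  "saturation P I = {a. \<exists>s. s \<notin> P \<and> s * a \<in> I}"

definition saturated :: "'a::comm_ring_1 set \<Rightarrow> 'a set \<Rightarrow> bool" where
  "saturated P I \<longleftrightarrow> is_ideal I \<and> saturation P I = I"

lemma saturationI: "s \<notin> P \<Longrightarrow> s * a \<in> I \<Longrightarrow> a \<in> saturation P I"
  unfolding saturation_def by blast

lemma saturationE:
  assumes "a \<in> saturation P I"
  obtains s where "s \<notin> P" "s * a \<in> I"
  using assms unfolding saturation_def by blast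

lemma saturation_mono: "I \<subseteq> J \<Longrightarrow> saturation P I \<subseteq> saturation P J"
  unfolding saturation_def by blast

lemma saturation_antimono: "Q \<subseteq> P \<Longrightarrow> saturation P I \<subseteq> saturation Q I"
  unfolding saturation_def by blast

lemma saturated_is_ideal: "saturated P X \<Longrightarrow> is_ideal X"
  unfolding saturated_def by blast

lemma saturatedD: "saturated P X \<Longrightarrow> s \<notin> P \<Longrightarrow> s * a \<in> X \<Longrightarrow> a \<in> X"
  unfolding saturated_def using saturationI by blast

lemma saturation_least: "saturated P J \<Longrightarrow> I \<subseteq> J \<Longrightarrow> saturation P I \<subseteq> J"
  unfolding saturated_def using saturation_mono by blast

context
  fixes P :: "'a::comm_ring_1 set"
  assumes P: "is_prime_ideal P"
begin

lemma ideal_saturation: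
  assumes I: "is_ideal I"
  shows "is_ideal (saturation P I)"
  unfolding is_ideal_def
proof (intro conjI ballI allI)
  show "0 \<in> saturation P I"
    using P I by (intro saturationI[of 1]) (auto simp: prime_ideal_one ideal_zero)
next
  fix u v assume "u \<in> saturation P I" "v \<in> saturation P I"
  then obtain s t where st: "s \<notin> P" "s * u \<in> I" "t \<notin> P" "t * v \<in> I"
    by (auto elim!: saturationE)
  have "(s * t) * (u + v) = t * (s * u) + s * (t * v)"
    by (simp add: algebra_simps)
  also have "\<dots> \<in> I"
    using I st by (simp add: ideal_add ideal_mult_left)
  finally show "u + v \<in> saturation P I"
    using prime_ideal_mult_notin[OF P st(1,3)] by (rule saturationI[rotated])
next
  fix r u assume "u \<in> saturation P I"
  then obtain s where "s \<notin> P" "s * u \<in> I"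
    by (auto elim!: saturationE)
  then show "r * u \<in> saturation P I"
    using ideal_mult_left[OF I, of "s * u" r] by (intro saturationI[of s]) (simp_all add: mult.left_commute)
qed

lemma subset_saturation: "I \<subseteq> saturation P I"
  using P prime_ideal_one by (force intro: saturationI[of 1])

lemma saturation_idem: "saturation P (saturation P I) = saturation P I"
proof
  show "saturation P (saturation P I) \<subseteq> saturation P I"
  proof
    fix a assume "a \<in> saturation P (saturation P I)"
    then obtain s t where "s \<notin> P" "t \<notin> P" "t * (s * a) \<in> I"
      by (auto elim!: saturationE)
    then show "a \<in> saturation P I"
      using prime_ideal_mult_notin[OF P] by (intro saturationI[of "t * s"]) (simp_all add: mult.assoc)
  qed
qed (rule subset_saturation)

lemma saturated_saturation: "is_ideal I \<Longrightarrow> saturated P (saturation P I)"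
  unfolding saturated_def using ideal_saturation saturation_idem by blast

lemma saturated_Int:
  assumes "saturated P X" "saturated P Y"
  shows "saturated P (X \<inter> Y)"
proof -
  have "saturation P (X \<inter> Y) \<subseteq> X \<inter> Y"
    using assms saturation_mono[of "X \<inter> Y"] unfolding saturated_def by blast
  then show ?thesis
    using assms subset_saturation[of "X \<inter> Y"] ideal_Int unfolding saturated_def by blast
qed

end

lemma saturation_zero:
  fixes P :: "'a::idom set"
  assumes "is_prime_ideal P"
  shows "saturation P {0} = {0}"
proof -
  have "s \<noteq> 0" if "s \<notin> P" for s
    using that ideal_zero[OF prime_ideal_is_ideal[OF assms]] by blast
  then show ?thesis
    using subset_saturation[OF assms, of "{0}"] by (auto simp: saturation_def)
qed

section \<open>Noetherian rings\<close>

context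
  assumes noeth: "noetherian_ring TYPE('a::comm_ring_1)"
begin

lemma noetherian_ascending_chain:
  assumes "\<And>k. is_ideal (C k :: 'a set)" "\<And>k. C k \<subseteq> C (Suc k)"
  shows "\<exists>k. C (Suc k) = C k"
proof -
  have "\<exists>N. \<forall>k\<ge>N. C k = C N"
    by (rule noeth[unfolded noetherian_ring_def, rule_format]) (use assms in blast)
  then obtain N where "\<forall>k\<ge>N. C k = C N" ..
  then have "C (Suc N) = C N" using le_SucI by blast
  then show ?thesis by blast
qed

lemma noetherian_wf: "wf {(J, I). is_ideal (I :: 'a set) \<and> is_ideal J \<and> I \<subset> J}"
  unfolding wf_iff_no_infinite_down_chain
proof
  assume "\<exists>f. \<forall>i. (f (Suc i), f i) \<in> {(J, I). is_ideal (I :: 'a set) \<and> is_ideal J \<and> I \<subset> J}"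
  then obtain f :: "nat \<Rightarrow> 'a set" where "\<And>i. is_ideal (f i)" "\<And>i. f i \<subset> f (Suc i)"
    by blast
  then obtain k where "f (Suc k) = f k"
    using noetherian_ascending_chain[of f] by blast
  with \<open>f k \<subset> f (Suc k)\<close> show False by simp
qed

lemma noetherian_maximal:
  assumes "(I0 :: 'a set) \<in> F" "\<And>I. I \<in> F \<Longrightarrow> is_ideal I"
  shows "\<exists>M\<in>F. \<forall>I\<in>F. M \<subseteq> I \<longrightarrow> I = M"
proof -
  obtain M where M: "M \<in> F"
    and min: "\<And>I. (I, M) \<in> {(J, I). is_ideal I \<and> is_ideal J \<and> I \<subset> J} \<Longrightarrow> I \<notin> F"
    using wfE_min[OF noetherian_wf assms(1)] by blast
  have "I = M" if "I \<in> F" "M \<subseteq> I" for I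
  proof (rule ccontr)
    assume "I \<noteq> M"
    then have "(I, M) \<in> {(J, I). is_ideal I \<and> is_ideal J \<and> I \<subset> J}"
      using that M assms(2) by blast
    then show False using min that(1) by blast
  qed
  then show ?thesis using M by blast
qed

lemma noetherian_finitely_generated:
  assumes I: "is_ideal (I :: 'a set)"
  shows "\<exists>ms. I = gen_ideal (set ms)"
proof -
  let ?F = "{gen_ideal (set ms) | ms. set ms \<subseteq> I}"
  have "\<exists>M\<in>?F. \<forall>J\<in>?F. M \<subseteq> J \<longrightarrow> J = M"
  proof (rule noetherian_maximal)
    show "gen_ideal (set []) \<in> ?F" by (intro CollectI exI[of _ "[]"]) simp
    show "is_ideal J" if "J \<in> ?F" for J
      using that ideal_gen_ideal by blast
  qed
  then obtain M where "M \<in> ?F" and max: "\<forall>J\<in>?F. M \<subseteq> J \<longrightarrow> J = M" ..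
  then obtain ms where ms: "M = gen_ideal (set ms)" "set ms \<subseteq> I" by blast
  have "a \<in> M" if "a \<in> I" for a
  proof -
    have "gen_ideal (set (a # ms)) \<in> ?F"
      using that ms(2) by (intro CollectI exI[of _ "a # ms"]) simp
    moreover have "M \<subseteq> gen_ideal (set (a # ms))" unfolding ms(1) by (rule gen_ideal_mono) auto
    ultimately have "gen_ideal (set (a # ms)) = M" using max by blast
    then show ?thesis using subset_gen_ideal[of "set (a # ms)"] by auto
  qed
  then show ?thesis
    using gen_ideal_least[OF I ms(2)] ms(1) by blast
qed

lemma exists_prime_ideal:
  assumes x: "\<not> (x :: 'a) dvd 1"
  shows "\<exists>M. is_prime_ideal M \<and> x \<in> M"
proof -
  let ?F = "{I. is_ideal I \<and> x \<in> I \<and> (1::'a) \<notin> I}"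
  have "\<exists>M\<in>?F. \<forall>J\<in>?F. M \<subseteq> J \<longrightarrow> J = M"
  proof (rule noetherian_maximal)
    show "gen_ideal {x} \<in> ?F"
      using x subset_gen_ideal[of "{x}"] ideal_gen_ideal[of "{x}"]
      by (auto simp: gen_ideal_singleton) (metis dvd_triv_right)
  qed blast
  then obtain M where "M \<in> ?F" and max: "\<forall>J\<in>?F. M \<subseteq> J \<longrightarrow> J = M" ..
  then have M: "is_ideal M" "x \<in> M" "1 \<notin> M" by auto
  have "b \<in> M" if ab: "a * b \<in> M" and a: "a \<notin> M" for a b
  proof -
    let ?J = "M + gen_ideal {a}"
    have J: "is_ideal ?J" "M \<subseteq> ?J" "a \<in> ?J"
      using M(1) subset_gen_ideal[of "{a}"] set_plus_subset_right[OF M(1), of "gen_ideal {a}"]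
      by (auto simp: ideal_set_plus ideal_gen_ideal set_plus_subset_left)
    then have "1 \<in> ?J"
      using max J M(2) a by blast
    then obtain m r where "1 = m + r * a" "m \<in> M"
      by (auto elim!: set_plus_elim simp: gen_ideal_singleton)
    then have "b = b * m + r * (a * b)" "b * m \<in> M" "r * (a * b) \<in> M"
      using M(1) ab by (auto simp: ideal_mult_left ideal_mult_right)
        (metis mult.right_neutral distrib_left mult.commute mult.left_commute)
    then show "b \<in> M" by (metis M(1) ideal_add)
  qed
  then show ?thesis
    using M unfolding is_prime_ideal_def by blast
qed

end

lemma Zorn_minimal_Inter:
  assumes "M \<in> S" and closed: "\<And>C. C \<subseteq> S \<Longrightarrow> C \<noteq> {} \<Longrightarrow> chain\<^sub>\<subseteq> C \<Longrightarrow> \<Inter>C \<in> S"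
  shows "\<exists>P\<in>S. \<forall>Q\<in>S. Q \<subseteq> P \<longrightarrow> Q = P"
proof -
  have "\<exists>U\<in>uminus ` S. \<forall>X\<in>C. X \<subseteq> U" if C: "C \<in> chains (uminus ` S)" for C
  proof (cases "C = {}")
    case True
    then show ?thesis using \<open>M \<in> S\<close> by blast
  next
    case False
    have "uminus ` C \<subseteq> S"
      using C unfolding chains_def by auto
    moreover have "chain\<^sub>\<subseteq> (uminus ` C)"
      using C unfolding chains_def chain_subset_def by (auto simp: Compl_subset_Compl_iff)
    ultimately have "\<Inter>(uminus ` C) \<in> S"
      using closed False by blast
    then have "- \<Inter>(uminus ` C) \<in> uminus ` S"
      by (rule imageI)
    moreover have "X \<subseteq> - \<Inter>(uminus ` C)" if "X \<in> C" for X
      using that by auto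
    ultimately show ?thesis by blast
  qed
  then have "\<exists>U\<in>uminus ` S. \<forall>X\<in>uminus ` S. U \<subseteq> X \<longrightarrow> X = U"
    by (intro Zorn_Lemma2 ballI)
  then obtain P where P: "P \<in> S" and max: "\<forall>X\<in>uminus ` S. - P \<subseteq> X \<longrightarrow> X = - P"
    by blast
  have "Q = P" if "Q \<in> S" "Q \<subseteq> P" for Q
    using max that by (metis Compl_subset_Compl_iff double_complement imageI)
  then show ?thesis using P by blast
qed

lemma exists_minimal_prime:
  assumes M: "is_prime_ideal M" "x \<in> M"
  shows "\<exists>P. is_prime_ideal P \<and> x \<in> P \<and> P \<subseteq> M \<and>
             (\<forall>Q. is_prime_ideal Q \<and> x \<in> Q \<and> Q \<subseteq> P \<longrightarrow> Q = P)"
proof -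
  define S where "S = {Q. is_prime_ideal Q \<and> x \<in> Q \<and> Q \<subseteq> M}"
  have "\<Inter>C \<in> S" if "C \<subseteq> S" "C \<noteq> {}" "chain\<^sub>\<subseteq> C" for C
  proof -
    have "is_prime_ideal (\<Inter>C)"
      using that unfolding S_def chain_subset_def by (intro prime_ideal_Inter_chain) auto
    then show ?thesis using that unfolding S_def by auto
  qed
  moreover have "M \<in> S" using M unfolding S_def by blast
  ultimately obtain P where P: "P \<in> S" and min: "\<forall>Q\<in>S. Q \<subseteq> P \<longrightarrow> Q = P"
    using Zorn_minimal_Inter by blast
  have "Q = P" if "is_prime_ideal Q" "x \<in> Q" "Q \<subseteq> P" for Q
    using that P min unfolding S_def by blast
  then show ?thesis using P unfolding S_def by blast
qed

definition dcc_on :: "'a set set \<Rightarrow> bool" where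
  "dcc_on F \<longleftrightarrow> wf {(X, Y). X \<in> F \<and> Y \<in> F \<and> X \<subset> Y}"

lemma dcc_onI:
  assumes "\<And>D. (\<And>k. D k \<in> F) \<Longrightarrow> (\<And>k. D (Suc k) \<subseteq> D k) \<Longrightarrow> \<exists>k. D (Suc k) = D k"
  shows "dcc_on F"
  unfolding dcc_on_def wf_iff_no_infinite_down_chain
proof
  assume "\<exists>f. \<forall>i. (f (Suc i), f i) \<in> {(X, Y). X \<in> F \<and> Y \<in> F \<and> X \<subset> Y}"
  then obtain f where f: "\<And>i. f i \<in> F" "\<And>i. f (Suc i) \<subset> f i" by blast
  then obtain k where "f (Suc k) = f k" using assms[of f] by blast
  with f(2)[of k] show False by simp
qed

lemma dcc_on_stabilizes:
  assumes "dcc_on F" "\<And>k. D k \<in> F" "\<And>k. D (Suc k) \<subseteq> D k"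
  shows "\<exists>N. \<forall>k\<ge>N. D k = D N"
proof -
  obtain Z where "Z \<in> range D"
    and min: "\<And>Y. (Y, Z) \<in> {(X, Y). X \<in> F \<and> Y \<in> F \<and> X \<subset> Y} \<Longrightarrow> Y \<notin> range D"
    using wfE_min[OF assms(1)[unfolded dcc_on_def], of "D 0" "range D"] by blast
  then obtain N where N: "Z = D N" by blast
  have "D k = D N" if "k \<ge> N" for k
  proof (rule ccontr)
    assume "D k \<noteq> D N"
    moreover have "D k \<subseteq> D N" using lift_Suc_antimono_le[of D, OF assms(3) that] .
    ultimately have "(D k, Z) \<in> {(X, Y). X \<in> F \<and> Y \<in> F \<and> X \<subset> Y}"
      using N assms(2) by blast
    then show False using min by blast
  qed
  then show ?thesis by blast
qed

section \<open>Krull's principal ideal theorem\<close>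

lemma ideal_colon: "is_ideal A \<Longrightarrow> is_ideal {r. r * b \<in> A}"
  unfolding is_ideal_def by (auto simp: distrib_right mult.assoc)

lemma saturated_modular:
  assumes P: "is_prime_ideal P" and D: "saturated P D" "saturated P D'" and T: "is_ideal T"
    and "D' \<subseteq> D" "D \<inter> T \<subseteq> D'" "saturation P (D + T) \<subseteq> saturation P (D' + T)"
  shows "D = D'"
proof
  show "D \<subseteq> D'"
  proof
    fix d assume d: "d \<in> D"
    then have "d \<in> saturation P (D' + T)"
      using assms(5-7) set_plus_subset_left[OF T] subset_saturation[OF P] by blast
    then obtain u d' t where u: "u \<notin> P" "u * d = d' + t" "d' \<in> D'" "t \<in> T"
      by (auto elim!: saturationE set_plus_elim)
    have "t = u * d - d'" using u(2) by simp
    also have "\<dots> \<in> D"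
      using saturated_is_ideal[OF D(1)] d u(3) \<open>D' \<subseteq> D\<close> by (auto intro: ideal_diff ideal_mult_left)
    finally have "t \<in> D'" using \<open>D \<inter> T \<subseteq> D'\<close> u(4) by blast
    then have "u * d \<in> D'"
      using u(2,3) saturated_is_ideal[OF D(2)] by (simp add: ideal_add)
    then show "d \<in> D'" using saturatedD[OF D(2) u(1)] by blast
  qed
qed fact

lemma dcc_on_saturated_extend:
  assumes P: "is_prime_ideal P" and T: "saturated P T" "A \<subseteq> T"
    and above: "dcc_on {X. saturated P X \<and> T \<subseteq> X}"
    and between: "dcc_on {X. saturated P X \<and> A \<subseteq> X \<and> X \<subseteq> T}"
  shows "dcc_on {X. saturated P X \<and> A \<subseteq> X}"
proof (rule dcc_onI)
  fix D assume D: "\<And>k. D k \<in> {X. saturated P X \<and> A \<subseteq> X}" "\<And>k. D (Suc k) \<subseteq> D k"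
  have T_ideal: "is_ideal T" using T(1) by (rule saturated_is_ideal)
  obtain N1 where N1: "\<forall>k\<ge>N1. saturation P (D k + T) = saturation P (D N1 + T)"
  proof (rule exE[OF dcc_on_stabilizes[OF above]])
    show "saturation P (D k + T) \<in> {X. saturated P X \<and> T \<subseteq> X}" for k
    proof -
      have "is_ideal (D k)" using D(1) saturated_is_ideal by blast
      then show ?thesis
        using T_ideal set_plus_subset_right[of "D k" T] subset_saturation[OF P, of "D k + T"]
        by (auto intro!: saturated_saturation[OF P] ideal_set_plus)
    qed
    show "saturation P (D (Suc k) + T) \<subseteq> saturation P (D k + T)" for k
      using D(2) by (intro saturation_mono set_plus_mono2) auto
  qed
  obtain N2 where N2: "\<forall>k\<ge>N2. D k \<inter> T = D N2 \<inter> T"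
  proof (rule exE[OF dcc_on_stabilizes[OF between]])
    show "D k \<inter> T \<in> {X. saturated P X \<and> A \<subseteq> X \<and> X \<subseteq> T}" for k
      using D(1) T by (auto intro: saturated_Int[OF P])
    show "D (Suc k) \<inter> T \<subseteq> D k \<inter> T" for k
      using D(2) by blast
  qed
  define N where "N = max N1 N2"
  have "D N = D (Suc N)"
  proof (rule saturated_modular[OF P _ _ T_ideal D(2)])
    show "saturated P (D N)" "saturated P (D (Suc N))" using D(1) by auto
    show "D N \<inter> T \<subseteq> D (Suc N)" "saturation P (D N + T) \<subseteq> saturation P (D (Suc N) + T)"
      using N1 N2 unfolding N_def by (metis Int_subset_iff le_SucI max.cobounded1 max.cobounded2 order_refl)+
  qed
  then show "\<exists>k. D (Suc k) = D k" by metis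
qed

lemma saturation_insert_Int_subset:
  assumes P: "is_prime_ideal P" and A: "is_ideal A"
    and D: "saturated P D" "A \<subseteq> D" "S \<subseteq> D"
    and w: "w \<notin> D" "\<And>c. c \<in> P \<Longrightarrow> c * w \<in> A"
  shows "saturation P (A + gen_ideal (insert w S)) \<inter> D \<subseteq> saturation P (A + gen_ideal S)"
proof
  fix z assume "z \<in> saturation P (A + gen_ideal (insert w S)) \<inter> D"
  then obtain s a c y where z: "z \<in> D" and s: "s \<notin> P" "s * z = a + (c * w + y)"
    and ay: "a \<in> A" "y \<in> gen_ideal S"
    by (auto elim!: saturationE set_plus_elim simp: gen_ideal_insert)
  have D_ideal: "is_ideal D" using D(1) by (rule saturated_is_ideal)
  have "c \<in> P"
  proof (rule ccontr)
    assume "c \<notin> P"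
    have "c * w = s * z - a - y" using s(2) by (simp add: algebra_simps)
    also have "\<dots> \<in> D"
      using D_ideal z ay D(2) gen_ideal_least[OF D_ideal D(3)]
      by (auto intro!: ideal_diff ideal_mult_left)
    finally show False using saturatedD[OF D(1) \<open>c \<notin> P\<close>] w(1) by blast
  qed
  then have "s * z = (a + c * w) + y" "a + c * w \<in> A"
    using s(2) ay(1) w(2) A by (simp_all add: algebra_simps ideal_add)
  then show "z \<in> saturation P (A + gen_ideal S)"
    using s(1) ay(2) by (intro saturationI[of s]) auto
qed

lemma saturation_span_Int_subset:
  assumes P: "is_prime_ideal P" and A: "saturated P A"
    and D: "\<And>k. saturated P (D k)" "\<And>k. A \<subseteq> D k" "\<And>k. D (Suc k) \<subseteq> D k"
    and w: "\<And>k. w k \<in> D k" "\<And>k. w k \<notin> D (Suc k)" "\<And>c k. c \<in> P \<Longrightarrow> c * w k \<in> A"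
  shows "j \<le> m \<Longrightarrow> saturation P (A + gen_ideal (w ` {j..<m})) \<inter> D m \<subseteq> A"
proof (induction j rule: inc_induct)
  case base
  show ?case using A by (simp add: gen_ideal_empty saturated_def)
next
  case (step j)
  have "{j..<m} = insert j {Suc j..<m}" using step(2) by auto
  then have eq: "w ` {j..<m} = insert (w j) (w ` {Suc j..<m})" by simp
  have D_anti: "D l \<subseteq> D k" if "k \<le> l" for k l
    using lift_Suc_antimono_le[of D, OF D(3) that] .
  have "saturation P (A + gen_ideal (insert (w j) (w ` {Suc j..<m}))) \<inter> D (Suc j)
      \<subseteq> saturation P (A + gen_ideal (w ` {Suc j..<m}))"
  proof (rule saturation_insert_Int_subset[OF P saturated_is_ideal[OF A] D(1,2) _ w(2,3)])
    show "w ` {Suc j..<m} \<subseteq> D (Suc j)" using w(1) D_anti by fastforce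
  qed
  moreover have "D m \<subseteq> D (Suc j)" using D_anti step(2) by simp
  ultimately show ?case unfolding eq using step.IH by blast
qed

text \<open>The saturated ideals between \<open>A\<close> and \<open>T\<close> correspond to subspaces of the vector space
  \<open>T\<^sub>P/A\<^sub>P\<close> over the residue field at \<open>P\<close>, which is finite-dimensional by noetherianity.\<close>

lemma dcc_on_saturated_interval:
  assumes noeth: "noetherian_ring TYPE('a::comm_ring_1)"
    and P: "is_prime_ideal (P :: 'a set)" and A: "saturated P A"
    and PT: "\<And>p t. p \<in> P \<Longrightarrow> t \<in> T \<Longrightarrow> p * t \<in> A"
  shows "dcc_on {X. saturated P X \<and> A \<subseteq> X \<and> X \<subseteq> T}"
proof (rule dcc_onI, rule ccontr)
  fix D assume D: "\<And>k. D k \<in> {X. saturated P X \<and> A \<subseteq> X \<and> X \<subseteq> T}" "\<And>k. D (Suc k) \<subseteq> D k"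
    and strict: "\<nexists>k. D (Suc k) = D k"
  have "\<exists>w. w \<in> D k \<and> w \<notin> D (Suc k)" for k
    using strict D(2)[of k] by blast
  then obtain w where w: "\<And>k. w k \<in> D k" "\<And>k. w k \<notin> D (Suc k)"
    by metis
  have A_ideal: "is_ideal A" using A by (rule saturated_is_ideal)
  have D_sat: "\<And>k. saturated P (D k)" and D_A: "\<And>k. A \<subseteq> D k"
    using D(1) by auto
  have Pw: "c * w k \<in> A" if "c \<in> P" for c k
    using PT[OF that] w(1)[of k] D(1)[of k] by blast
  have independent: "saturation P (A + gen_ideal (w ` {..<m})) \<inter> D m \<subseteq> A" for m
    using saturation_span_Int_subset[where D = D and w = w and j = 0, OF P A D_sat D_A D(2) w Pw]
    by (simp add: lessThan_atLeast0)
  define C where "C m = saturation P (A + gen_ideal (w ` {..<m}))" for m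
  have "\<exists>m. C (Suc m) = C m"
  proof (rule noetherian_ascending_chain[OF noeth])
    show "is_ideal (C m)" for m
      unfolding C_def by (intro ideal_saturation[OF P] ideal_set_plus A_ideal ideal_gen_ideal)
    show "C m \<subseteq> C (Suc m)" for m
      unfolding C_def by (intro saturation_mono set_plus_mono2 gen_ideal_mono image_mono) auto
  qed
  then obtain m where "C (Suc m) = C m" ..
  moreover have "w m \<in> C (Suc m)"
  proof -
    have "w m \<in> gen_ideal (w ` {..<Suc m})" by (rule subset_gen_ideal[THEN subsetD]) simp
    then have "w m \<in> A + gen_ideal (w ` {..<Suc m})"
      using set_plus_subset_right[OF A_ideal] by blast
    then show ?thesis unfolding C_def using subset_saturation[OF P] by blast
  qed
  moreover have "w m \<notin> C m"
    using independent[of m] w D(1)[of "Suc m"] unfolding C_def by blast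
  ultimately show False by simp
qed

lemma gen_ideal_times_insert_subset:
  assumes J: "is_ideal J"
  shows "gen_ideal (J * gen_ideal (insert m S)) \<subseteq> J * {m} + gen_ideal (J * gen_ideal S)"
proof (rule gen_ideal_least)
  show "is_ideal (J * {m} + gen_ideal (J * gen_ideal S))"
    by (intro ideal_set_plus ideal_set_times_singleton[OF J] ideal_gen_ideal)
  show "J * gen_ideal (insert m S) \<subseteq> J * {m} + gen_ideal (J * gen_ideal S)"
  proof
    fix z assume "z \<in> J * gen_ideal (insert m S)"
    then obtain j y where z: "z = j * y" "j \<in> J" "y \<in> gen_ideal (insert m S)"
      by (auto elim!: set_times_elim)
    then obtain c y' where y: "y = c * m + y'" "y' \<in> gen_ideal S"
      by (auto simp: gen_ideal_insert elim!: set_plus_elim)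
    have "z = (j * c) * m + j * y'"
      using z(1) y(1) by (simp add: algebra_simps)
    moreover have "(j * c) * m \<in> J * {m}"
      using ideal_mult_right[OF J z(2)] by (intro set_times_intro) auto
    moreover have "j * y' \<in> gen_ideal (J * gen_ideal S)"
      using z(2) y(2) by (rule subset_gen_ideal[THEN subsetD, OF set_times_intro])
    ultimately show "z \<in> J * {m} + gen_ideal (J * gen_ideal S)"
      by (simp add: set_plus_intro)
  qed
qed

lemma saturation_absorb:
  assumes P: "is_prime_ideal P" and J: "J \<subseteq> P" and m: "m \<in> saturation P (N + J * {m})"
  shows "m \<in> saturation P N"
proof -
  obtain u n j where u: "u \<notin> P" "u * m = n + j * m" "n \<in> N" "j \<in> J"
    using m by (auto elim!: saturationE set_plus_elim set_times_elim)
  have "u - j \<notin> P"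
  proof
    assume "u - j \<in> P"
    then have "(u - j) + j \<in> P"
      using J u(4) prime_ideal_is_ideal[OF P] by (blast intro: ideal_add)
    then show False using u(1) by simp
  qed
  moreover have "(u - j) * m = n" using u(2) by (simp add: algebra_simps)
  ultimately show ?thesis using u(3) by (intro saturationI[of "u - j"]) simp_all
qed

lemma nakayama_saturation:
  assumes P: "is_prime_ideal P" and J: "is_ideal J" "J \<subseteq> P"
  shows "is_ideal N \<Longrightarrow> gen_ideal (set ms) \<subseteq> saturation P (N + gen_ideal (J * gen_ideal (set ms)))
    \<Longrightarrow> gen_ideal (set ms) \<subseteq> saturation P N"
proof (induction ms arbitrary: N)
  case Nil
  then show ?case
    using ideal_zero[of N] subset_saturation[OF P, of N] by (auto simp: gen_ideal_empty)
next
  case (Cons m ms)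
  let ?M = "gen_ideal (insert m (set ms))" and ?M' = "gen_ideal (set ms)" and ?N' = "N + J * {m}"
  have N: "saturated P (saturation P N)" by (rule saturated_saturation[OF P Cons.prems(1)])
  have N': "is_ideal ?N'"
    using Cons.prems(1) J(1) by (intro ideal_set_plus ideal_set_times_singleton)
  have "N + gen_ideal (J * ?M) \<subseteq> N + (J * {m} + gen_ideal (J * ?M'))"
    using gen_ideal_times_insert_subset[OF J(1)] by (intro set_plus_mono2) auto
  then have hyp: "?M \<subseteq> saturation P (?N' + gen_ideal (J * ?M'))"
    using Cons.prems(2) saturation_mono by (simp add: add.assoc) blast
  have "?M' \<subseteq> ?M" by (rule gen_ideal_mono) blast
  then have IH: "?M' \<subseteq> saturation P ?N'"
    using Cons.IH[OF N'] hyp by blast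
  have "?N' + gen_ideal (J * ?M') \<subseteq> saturation P ?N'"
    using gen_ideal_set_times_subset[OF ideal_gen_ideal, of J "set ms"] IH
    by (intro set_plus_least ideal_saturation[OF P N'] subset_saturation[OF P]) auto
  then have "?M \<subseteq> saturation P ?N'"
    using hyp saturation_least[OF saturated_saturation[OF P N']] by blast
  then have m: "m \<in> saturation P N"
    using saturation_absorb[OF P J(2)] subset_gen_ideal by blast
  then have "?N' \<subseteq> saturation P N"
    using ideal_mult_left[OF saturated_is_ideal[OF N] m] subset_saturation[OF P, of N]
    by (intro set_plus_least saturated_is_ideal[OF N]) (auto elim!: set_times_elim)
  then have "insert m (set ms) \<subseteq> saturation P N"
    using m IH saturation_least[OF N] subset_gen_ideal[of "set ms"] by blast
  then show ?case
    by (simp add: gen_ideal_least saturated_is_ideal[OF N])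
qed

lemma saturation_principal_split:
  assumes Q: "is_prime_ideal Q" and x: "x \<notin> Q" and S: "saturated Q S" "S' \<subseteq> S"
    and split: "S \<subseteq> saturation P (S' + gen_ideal {x})"
  shows "S \<subseteq> saturation P (S' + gen_ideal (gen_ideal {x} * S))"
proof
  fix a assume a: "a \<in> S"
  then obtain s b r where s: "s \<notin> P" "s * a = b + r * x" "b \<in> S'"
    using split by (auto elim!: saturationE set_plus_elim simp: gen_ideal_singleton)
  have S_ideal: "is_ideal S" using S(1) by (rule saturated_is_ideal)
  have "x * r = s * a - b" using s(2) by (simp add: algebra_simps)
  also have "\<dots> \<in> S"
    using S_ideal a s(3) S(2) by (blast intro: ideal_diff ideal_mult_left)
  finally have "r \<in> S" using saturatedD[OF S(1) x] by blast
  moreover have "x \<in> gen_ideal {x}" by (rule subset_gen_ideal[THEN subsetD]) simp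
  ultimately have "x * r \<in> gen_ideal {x} * S" by (simp add: set_times_intro)
  then have "x * r \<in> gen_ideal (gen_ideal {x} * S)" by (rule subset_gen_ideal[THEN subsetD])
  then have "s * a \<in> S' + gen_ideal (gen_ideal {x} * S)"
    using s(2,3) by (simp add: set_plus_intro mult.commute)
  then show "a \<in> saturation P (S' + gen_ideal (gen_ideal {x} * S))"
    using s(1) by (rule saturationI[rotated])
qed

lemma prime_eq_zero_if_symbolic_power_stable:
  fixes Q :: "'a::idom set"
  assumes noeth: "noetherian_ring TYPE('a)" and Q: "is_prime_ideal Q"
    and stable: "saturation Q (ideal_power Q N) \<subseteq> saturation Q (ideal_power Q (Suc N))"
  shows "Q = {0}"
proof -
  have Q_ideal: "is_ideal Q" using Q by (rule prime_ideal_is_ideal)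
  obtain ms where ms: "ideal_power Q N = gen_ideal (set ms)"
    using noetherian_finitely_generated[OF noeth ideal_ideal_power] by blast
  have "ideal_power Q N \<subseteq> saturation Q ({0} + gen_ideal (Q * ideal_power Q N))"
    using subset_saturation[OF Q, of "ideal_power Q N"] stable by simp
  then have "ideal_power Q N \<subseteq> saturation Q {0}"
    using nakayama_saturation[OF Q Q_ideal subset_refl ideal_zero_set] ms by simp
  then have zero: "ideal_power Q N \<subseteq> {0}"
    by (simp add: saturation_zero[OF Q])
  have "a = 0" if "a \<in> Q" for a
    using power_in_ideal_power[OF that, of N] zero by auto
  then show ?thesis using ideal_zero[OF Q_ideal] by blast
qed

lemma height_one_primeI:
  fixes P :: "'a::idom set"
  assumes P: "is_prime_ideal P" "P \<noteq> {0}"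
    and below: "\<And>Q. is_prime_ideal Q \<Longrightarrow> Q \<subset> P \<Longrightarrow> Q = {0}"
  shows "height_one_prime P"
  unfolding height_one_prime_def
proof (intro conjI)
  have "{0} \<subset> P" using P ideal_zero[OF prime_ideal_is_ideal[OF P(1)]] by blast
  then show "height_ge P 1"
    unfolding height_ge_def using P(1) prime_ideal_zero
    by (intro exI[of _ "\<lambda>i. if i = 0 then {0} else P"]) (simp add: less_Suc_eq_0_disj)
  show "\<not> height_ge P 2"
  proof
    assume "height_ge P 2"
    then obtain C where C: "C 2 = P" "\<forall>i\<le>2. is_prime_ideal (C i)" "\<forall>i<2. C i \<subset> C (Suc i)"
      unfolding height_ge_def by blast
    have "C 1 \<subset> C 2" using C(3) by (simp add: numeral_2_eq_2)
    then have "C 1 = {0}" using below C(1,2) by simp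
    moreover have "C 0 \<subset> C 1" using C(3) by simp
    moreover have "0 \<in> C 0" using C(2) ideal_zero[OF prime_ideal_is_ideal, of "C 0"] by simp
    ultimately show False by (auto simp: psubset_eq subset_singleton_iff)
  qed
qed fact

lemma saturation_annihilated:
  assumes A: "saturated P A" and b: "\<And>p. p \<in> P \<Longrightarrow> p * b \<in> A" and p: "p \<in> P"
    and t: "t \<in> saturation P (A + gen_ideal {b})"
  shows "p * t \<in> A"
proof -
  have A_ideal: "is_ideal A" using A by (rule saturated_is_ideal)
  obtain s a r where s: "s \<notin> P" "s * t = a + r * b" "a \<in> A"
    using t by (auto elim!: saturationE set_plus_elim simp: gen_ideal_singleton)
  have "s * (p * t) = p * a + r * (p * b)" using s(2) by (simp add: algebra_simps)
  also have "\<dots> \<in> A"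
    using A_ideal s(3) b[OF p] by (blast intro: ideal_add ideal_mult_left)
  finally show ?thesis using saturatedD[OF A s(1)] by blast
qed

lemma prime_ideal_maximal_colon:
  assumes A: "is_ideal A" and b: "b \<notin> A"
    and max: "\<And>c. c \<notin> A \<Longrightarrow> {r. r * b \<in> A} \<subseteq> {r. r * c \<in> A} \<Longrightarrow>
      {r. r * c \<in> A} = {r. r * b \<in> A}"
  shows "is_prime_ideal {r. r * b \<in> A}"
  unfolding is_prime_ideal_def
proof (intro conjI allI impI)
  let ?M = "{r. r * b \<in> A}"
  show "is_ideal ?M" by (rule ideal_colon[OF A])
  have "1 \<notin> ?M" using b by simp
  then show "?M \<noteq> UNIV" by blast
  fix u v assume uv: "u * v \<in> ?M"
  show "u \<in> ?M \<or> v \<in> ?M"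
  proof (rule disjCI, rule ccontr)
    assume "v \<notin> ?M" "u \<notin> ?M"
    then have "u * b \<notin> A" by simp
    moreover have "?M \<subseteq> {r. r * (u * b) \<in> A}"
      using ideal_mult_left[OF A, of _ u] by (auto simp: mult.left_commute[of _ u])
    ultimately have "{r. r * (u * b) \<in> A} = ?M" by (rule max)
    then show False using uv \<open>v \<notin> ?M\<close> by (auto simp: algebra_simps)
  qed
qed

locale minimal_prime_over =
  fixes P :: "'a::idom set" and x :: 'a
  assumes noetherian: "noetherian_ring TYPE('a)"
    and prime: "is_prime_ideal P" and mem: "x \<in> P"
    and minimal: "\<And>Q. is_prime_ideal Q \<Longrightarrow> x \<in> Q \<Longrightarrow> Q \<subseteq> P \<Longrightarrow> Q = P"
begin

lemma exists_annihilated_by_prime: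
  assumes A: "saturated P A" "x \<in> A" "A \<noteq> UNIV"
  obtains b where "b \<notin> A" "\<And>p. p \<in> P \<Longrightarrow> p * b \<in> A"
proof -
  have A_ideal: "is_ideal A" using A(1) by (rule saturated_is_ideal)
  let ?F = "{{r. r * b \<in> A} | b. b \<notin> A}"
  have "\<exists>M\<in>?F. \<forall>J\<in>?F. M \<subseteq> J \<longrightarrow> J = M"
  proof (rule noetherian_maximal[OF noetherian])
    show "{r. r * 1 \<in> A} \<in> ?F"
      using A(3) ideal_eq_UNIV_if_one[OF A_ideal] by blast
    show "is_ideal J" if "J \<in> ?F" for J
      using that ideal_colon[OF A_ideal] by blast
  qed
  then obtain b where b: "b \<notin> A"
    and max: "\<forall>J\<in>?F. {r. r * b \<in> A} \<subseteq> J \<longrightarrow> J = {r. r * b \<in> A}"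
    by blast
  have "{r. r * b \<in> A} = P"
  proof (rule minimal)
    show "is_prime_ideal {r. r * b \<in> A}"
      using b max by (intro prime_ideal_maximal_colon[OF A_ideal]) blast+
    show "x \<in> {r. r * b \<in> A}" using ideal_mult_right[OF A_ideal A(2)] by simp
    show "{r. r * b \<in> A} \<subseteq> P" using saturatedD[OF A(1)] b by blast
  qed
  then show ?thesis using that b by blast
qed

text \<open>In the localization at \<open>P\<close>, the ring modulo \<open>x\<close> is artinian.\<close>

lemma dcc_on_saturated_above: "saturated P A \<Longrightarrow> x \<in> A \<Longrightarrow> dcc_on {X. saturated P X \<and> A \<subseteq> X}"
proof (induction A rule: wf_induct_rule[OF noetherian_wf[OF noetherian]])
  case (1 A)
  show ?case
  proof (cases "A = UNIV")
    case True
    then show ?thesis by (intro dcc_onI) auto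
  next
    case False
    obtain b where b: "b \<notin> A" "\<And>p. p \<in> P \<Longrightarrow> p * b \<in> A"
      using exists_annihilated_by_prime[OF "1.prems" False] by blast
    have A_ideal: "is_ideal A" using "1.prems"(1) by (rule saturated_is_ideal)
    define T where "T = saturation P (A + gen_ideal {b})"
    have T: "saturated P T"
      unfolding T_def by (intro saturated_saturation[OF prime] ideal_set_plus A_ideal ideal_gen_ideal)
    have "A \<subseteq> T" "b \<in> T"
      unfolding T_def using set_plus_subset_left[OF ideal_gen_ideal, of A "{b}"]
        set_plus_subset_right[OF A_ideal, of "gen_ideal {b}"] subset_gen_ideal[of "{b}"]
        subset_saturation[OF prime]
      by blast+
    then have "(T, A) \<in> {(J, I). is_ideal I \<and> is_ideal J \<and> I \<subset> J}"
      using A_ideal saturated_is_ideal[OF T] b(1) by blast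
    then have above: "dcc_on {X. saturated P X \<and> T \<subseteq> X}"
      using "1.IH" T \<open>A \<subseteq> T\<close> "1.prems"(2) by blast
    have "p * t \<in> A" if "p \<in> P" "t \<in> T" for p t
      using saturation_annihilated[OF "1.prems"(1), of b p t] b(2) that unfolding T_def by blast
    then have "dcc_on {X. saturated P X \<and> A \<subseteq> X \<and> X \<subseteq> T}"
      by (rule dcc_on_saturated_interval[OF noetherian prime "1.prems"(1)])
    then show ?thesis
      by (rule dcc_on_saturated_extend[OF prime T \<open>A \<subseteq> T\<close> above])
  qed
qed

lemma exists_stable_modulo_principal:
  assumes S: "\<And>n. is_ideal (S n)" "\<And>n. S (Suc n) \<subseteq> S n"
  obtains N where "S N \<subseteq> saturation P (S (Suc N) + gen_ideal {x})"
proof -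
  define D where "D n = saturation P (S n + gen_ideal {x})" for n
  define A0 where "A0 = saturation P (gen_ideal {x})"
  have A0: "saturated P A0" "x \<in> A0"
    unfolding A0_def using saturated_saturation[OF prime ideal_gen_ideal]
      subset_gen_ideal[of "{x}"] subset_saturation[OF prime]
    by blast+
  have "\<exists>N. \<forall>k\<ge>N. D k = D N"
  proof (rule dcc_on_stabilizes[OF dcc_on_saturated_above[OF A0]])
    show "D k \<in> {X. saturated P X \<and> A0 \<subseteq> X}" for k
      unfolding D_def A0_def
      using saturated_saturation[OF prime ideal_set_plus[OF S(1) ideal_gen_ideal]]
        saturation_mono[OF set_plus_subset_right[OF S(1), of "gen_ideal {x}" k]]
      by blast
    show "D (Suc k) \<subseteq> D k" for k
      unfolding D_def using S(2) by (intro saturation_mono set_plus_mono2) auto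
  qed
  then obtain N where "D (Suc N) = D N" using le_SucI by blast
  moreover have "S N \<subseteq> D N"
    unfolding D_def using set_plus_subset_left[OF ideal_gen_ideal] subset_saturation[OF prime] by blast
  ultimately have "S N \<subseteq> saturation P (S (Suc N) + gen_ideal {x})"
    unfolding D_def by simp
  then show thesis by (rule that)
qed

lemma symbolic_power_stable:
  assumes Q: "is_prime_ideal Q" "Q \<subset> P"
  shows "\<exists>N. saturation Q (ideal_power Q N) \<subseteq> saturation Q (ideal_power Q (Suc N))"
proof -
  define S where "S n = saturation Q (ideal_power Q n)" for n
  have S: "saturated Q (S n)" for n
    unfolding S_def by (rule saturated_saturation[OF Q(1) ideal_ideal_power])
  have S_anti: "S (Suc n) \<subseteq> S n" for n
    unfolding S_def by (rule saturation_mono[OF ideal_power_Suc_subset])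
  obtain N where "S N \<subseteq> saturation P (S (Suc N) + gen_ideal {x})"
    using exists_stable_modulo_principal[where S = S, OF saturated_is_ideal[OF S] S_anti] by blast
  moreover have "x \<notin> Q" using minimal[OF Q(1)] Q(2) by blast
  ultimately have "S N \<subseteq> saturation P (S (Suc N) + gen_ideal (gen_ideal {x} * S N))"
    by (intro saturation_principal_split[OF Q(1) _ S S_anti])
  moreover obtain ms where "S N = gen_ideal (set ms)"
    using noetherian_finitely_generated[OF noetherian saturated_is_ideal[OF S]] by blast
  moreover have "gen_ideal {x} \<subseteq> P"
    using gen_ideal_least[OF prime_ideal_is_ideal[OF prime]] mem by blast
  ultimately have "S N \<subseteq> saturation P (S (Suc N))"
    using nakayama_saturation[OF prime ideal_gen_ideal _ saturated_is_ideal[OF S]] by metis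
  also have "\<dots> \<subseteq> saturation Q (S (Suc N))"
    using Q(2) by (intro saturation_antimono) blast
  also have "\<dots> = S (Suc N)"
    unfolding S_def by (rule saturation_idem[OF Q(1)])
  finally show ?thesis unfolding S_def by blast
qed

theorem krull_principal_ideal: "is_prime_ideal Q \<Longrightarrow> Q \<subset> P \<Longrightarrow> Q = {0}"
  using symbolic_power_stable prime_eq_zero_if_symbolic_power_stable[OF noetherian] by blast

lemma height_one: "x \<noteq> 0 \<Longrightarrow> height_one_prime P"
  using height_one_primeI[OF prime _ krull_principal_ideal] mem by blast

end

section \<open>Graded rings\<close>

definition hcomp :: "(int \<Rightarrow> 'a::comm_ring_1 set) \<Rightarrow> 'a \<Rightarrow> int \<Rightarrow> 'a" where
  "hcomp G b = (THE f. graded_decomp G b f)"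

definition hsupp :: "(int \<Rightarrow> 'a::comm_ring_1 set) \<Rightarrow> 'a \<Rightarrow> int set" where
  "hsupp G b = {k. hcomp G b k \<noteq> 0}"

lemma subring_gen_least:
  assumes "S \<subseteq> R" "0 \<in> R" "1 \<in> R" "\<And>a b. a \<in> R \<Longrightarrow> b \<in> R \<Longrightarrow> a + b \<in> R"
    "\<And>a. a \<in> R \<Longrightarrow> - a \<in> R" "\<And>a b. a \<in> R \<Longrightarrow> b \<in> R \<Longrightarrow> a * b \<in> R"
  shows "subring_gen S \<subseteq> R"
proof
  fix b assume "b \<in> subring_gen S"
  then show "b \<in> R" by (induction b rule: subring_gen.induct) (use assms in blast)+
qed

locale graded =
  fixes G :: "int \<Rightarrow> 'a::idom set"
  assumes graded_ring: "graded_ring G"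
begin

lemma zero_in_degree: "0 \<in> G i"
  using graded_ring unfolding graded_ring_def by blast

lemma add_in_degree: "a \<in> G i \<Longrightarrow> b \<in> G i \<Longrightarrow> a + b \<in> G i"
  using graded_ring unfolding graded_ring_def by blast

lemma mult_in_degree: "a \<in> G i \<Longrightarrow> b \<in> G j \<Longrightarrow> a * b \<in> G (i + j)"
  using graded_ring unfolding graded_ring_def by blast

lemma graded_decomp_hcomp: "graded_decomp G b (hcomp G b)"
proof -
  have "\<exists>!f. graded_decomp G b f" using graded_ring unfolding graded_ring_def by blast
  then show ?thesis unfolding hcomp_def by (rule theI')
qed

lemma hcomp_unique: "graded_decomp G b f \<Longrightarrow> hcomp G b = f"
  using graded_ring graded_decomp_hcomp unfolding graded_ring_def by blast

lemma hcomp_in_degree: "hcomp G b k \<in> G k"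
  using graded_decomp_hcomp unfolding graded_decomp_def by blast

lemma finite_hsupp: "finite (hsupp G b)"
  using graded_decomp_hcomp unfolding graded_decomp_def hsupp_def by blast

lemma sum_hcomp:
  assumes "finite S" "hsupp G b \<subseteq> S"
  shows "sum (hcomp G b) S = b"
proof -
  have "sum (hcomp G b) S = sum (hcomp G b) (hsupp G b)"
    by (rule sum.mono_neutral_right[OF assms]) (auto simp: hsupp_def)
  also have "\<dots> = b"
    using graded_decomp_hcomp unfolding graded_decomp_def hsupp_def by simp
  finally show ?thesis .
qed

lemma hcomp_eqI:
  assumes "\<And>i. f i \<in> G i" "finite S" "{k. f k \<noteq> 0} \<subseteq> S" "b = sum f S"
  shows "hcomp G b = f"
proof (rule hcomp_unique)
  have "sum f S = sum f {k. f k \<noteq> 0}"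
    by (rule sum.mono_neutral_right[OF assms(2,3)]) auto
  then show "graded_decomp G b f"
    unfolding graded_decomp_def using assms finite_subset by auto
qed

lemma hcomp_homogeneous:
  assumes "a \<in> G d"
  shows "hcomp G a k = (if k = d then a else 0)"
proof -
  have "hcomp G a = (\<lambda>k. if k = d then a else 0)"
    by (rule hcomp_eqI[where S = "{d}"]) (auto simp: assms zero_in_degree)
  then show ?thesis by simp
qed

lemma hcomp_zero: "hcomp G 0 k = 0"
  using hcomp_homogeneous[OF zero_in_degree[of 0]] by simp

lemma hcomp_add: "hcomp G (a + b) k = hcomp G a k + hcomp G b k"
proof -
  let ?S = "hsupp G a \<union> hsupp G b"
  have "hcomp G (a + b) = (\<lambda>k. hcomp G a k + hcomp G b k)"
  proof (rule hcomp_eqI)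
    show "hcomp G a i + hcomp G b i \<in> G i" for i by (simp add: add_in_degree hcomp_in_degree)
    show "finite ?S" by (simp add: finite_hsupp)
    show "{k. hcomp G a k + hcomp G b k \<noteq> 0} \<subseteq> ?S" unfolding hsupp_def by auto
    show "a + b = (\<Sum>k\<in>?S. hcomp G a k + hcomp G b k)"
      by (simp add: sum.distrib sum_hcomp finite_hsupp)
  qed
  then show ?thesis by simp
qed

lemma hcomp_uminus: "hcomp G (- a) k = - hcomp G a k"
  using hcomp_add[of a "- a" k] by (simp add: hcomp_zero eq_neg_iff_add_eq_0 add.commute)

lemma hcomp_diff: "hcomp G (a - b) k = hcomp G a k - hcomp G b k"
  using hcomp_add[of a "- b" k] by (simp add: hcomp_uminus)

lemma hcomp_sum: "finite S \<Longrightarrow> hcomp G (sum f S) k = (\<Sum>s\<in>S. hcomp G (f s) k)"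
  by (induction S rule: finite_induct) (simp_all add: hcomp_zero hcomp_add)

lemma hcomp_mult:
  assumes A: "finite A" "hsupp G a \<subseteq> A" and B: "finite B" "hsupp G b \<subseteq> B"
  shows "hcomp G (a * b) k = (\<Sum>i\<in>A. \<Sum>j\<in>B. if i + j = k then hcomp G a i * hcomp G b j else 0)"
proof -
  have "a * b = sum (hcomp G a) A * sum (hcomp G b) B"
    using sum_hcomp[OF A] sum_hcomp[OF B] by simp
  also have "\<dots> = (\<Sum>i\<in>A. \<Sum>j\<in>B. hcomp G a i * hcomp G b j)"
    by (rule sum_product)
  finally have "a * b = (\<Sum>i\<in>A. \<Sum>j\<in>B. hcomp G a i * hcomp G b j)" .
  then have "hcomp G (a * b) k = (\<Sum>i\<in>A. \<Sum>j\<in>B. hcomp G (hcomp G a i * hcomp G b j) k)"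
    using A(1) B(1) by (simp add: hcomp_sum)
  also have "\<dots> = (\<Sum>i\<in>A. \<Sum>j\<in>B. if i + j = k then hcomp G a i * hcomp G b j else 0)"
    by (simp add: hcomp_homogeneous[OF mult_in_degree[OF hcomp_in_degree hcomp_in_degree]] eq_commute)
  finally show ?thesis .
qed

lemma hcomp_mult_top:
  assumes a: "hsupp G a \<subseteq> {..m}" and b: "hsupp G b \<subseteq> {..n}"
  shows "hcomp G (a * b) (m + n) = hcomp G a m * hcomp G b n"
proof -
  let ?A = "insert m (hsupp G a)" and ?B = "insert n (hsupp G b)"
  have "hcomp G (a * b) (m + n)
      = (\<Sum>i\<in>?A. \<Sum>j\<in>?B. if i + j = m + n then hcomp G a i * hcomp G b j else 0)"
    by (rule hcomp_mult) (auto simp: finite_hsupp)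
  also have "\<dots> = (\<Sum>i\<in>?A. if i = m then \<Sum>j\<in>?B. if j = n then hcomp G a i * hcomp G b j else 0 else 0)"
  proof (intro sum.cong refl)
    fix i assume "i \<in> ?A"
    then have i: "i \<le> m" using a by auto
    have j: "j \<le> n" if "j \<in> ?B" for j using that b by auto
    show "(\<Sum>j\<in>?B. if i + j = m + n then hcomp G a i * hcomp G b j else 0)
        = (if i = m then \<Sum>j\<in>?B. if j = n then hcomp G a i * hcomp G b j else 0 else 0)"
    proof (cases "i = m")
      case True
      then show ?thesis by (auto intro!: sum.cong)
    next
      case False
      then have "i + j \<noteq> m + n" if "j \<in> ?B" for j using i j[OF that] by linarith
      then show ?thesis using False by (auto intro!: sum.neutral)
    qed
  qed
  also have "\<dots> = hcomp G a m * hcomp G b n"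
    by (simp add: finite_hsupp)
  finally show ?thesis .
qed

text \<open>Compare the components of \<open>z * 1 = z\<close> for a nonzero homogeneous \<open>z\<close>.\<close>

lemma one_in_degree_zero: "1 \<in> G 0"
proof -
  have "hsupp G 1 \<noteq> {}"
    using sum_hcomp[OF finite_hsupp subset_refl, of 1] by auto
  then obtain d where "hcomp G 1 d \<noteq> 0" unfolding hsupp_def by blast
  define z where "z = hcomp G 1 d"
  have z: "z \<in> G d" "z \<noteq> 0" unfolding z_def using hcomp_in_degree \<open>hcomp G 1 d \<noteq> 0\<close> by auto
  have "hcomp G 1 i = 0" if "i \<noteq> 0" for i
  proof -
    have zs: "hsupp G z \<subseteq> {d}" unfolding hsupp_def using hcomp_homogeneous[OF z(1)] by auto
    have "hcomp G (z * 1) (d + i) = (\<Sum>i'\<in>{d}. \<Sum>j\<in>hsupp G 1. if i' + j = d + i then hcomp G z i' * hcomp G 1 j else 0)"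
      by (rule hcomp_mult[OF _ zs finite_hsupp subset_refl]) simp
    also have "\<dots> = (\<Sum>j\<in>hsupp G 1. if j = i then z * hcomp G 1 j else 0)"
      by (auto simp: hcomp_homogeneous[OF z(1)] intro!: sum.cong)
    also have "\<dots> = (if i \<in> hsupp G 1 then z * hcomp G 1 i else 0)"
      using finite_hsupp by (simp add: sum.delta')
    also have "\<dots> = z * hcomp G 1 i"
      by (simp add: hsupp_def)
    finally have "z * hcomp G 1 i = hcomp G z (d + i)" by simp
    also have "\<dots> = 0" using hcomp_homogeneous[OF z(1)] that by simp
    finally show ?thesis using z(2) by simp
  qed
  then have "hsupp G 1 \<subseteq> {0}" unfolding hsupp_def by auto
  then have "hcomp G 1 0 = 1" using sum_hcomp[of "{0}" 1] by simp
  then show ?thesis using hcomp_in_degree[of 1 0] by simp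
qed

definition hcore :: "'a set \<Rightarrow> 'a set" where
  "hcore Q = {b. \<forall>k. hcomp G b k \<in> Q}"

context
  fixes Q :: "'a set"
  assumes Q: "is_ideal Q"
begin

lemma ideal_hcore: "is_ideal (hcore Q)"
  unfolding is_ideal_def hcore_def
proof (intro conjI ballI allI; clarsimp)
  show "hcomp G 0 k \<in> Q" for k by (simp add: hcomp_zero ideal_zero[OF Q])
  show "hcomp G (a + b) k \<in> Q" if "\<forall>k. hcomp G a k \<in> Q" "\<forall>k. hcomp G b k \<in> Q" for a b k
    using that by (simp add: hcomp_add ideal_add[OF Q])
  show "hcomp G (r * a) k \<in> Q" if "\<forall>k. hcomp G a k \<in> Q" for r a k
    using that
    by (simp add: hcomp_mult[OF finite_hsupp subset_refl finite_hsupp subset_refl] ideal_sum[OF Q]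
        ideal_zero[OF Q] ideal_mult_left[OF Q])
qed

lemma hcore_subset: "hcore Q \<subseteq> Q"
proof
  fix b assume "b \<in> hcore Q"
  then have "sum (hcomp G b) (hsupp G b) \<in> Q"
    unfolding hcore_def by (intro ideal_sum[OF Q]) simp
  then show "b \<in> Q" by (simp add: sum_hcomp[OF finite_hsupp subset_refl])
qed

lemma homogeneous_in_hcore:
  assumes "a \<in> G d" "a \<in> Q"
  shows "a \<in> hcore Q"
  unfolding hcore_def using hcomp_homogeneous[OF assms(1)] assms(2) ideal_zero[OF Q] by simp

lemma homogeneous_ideal_hcore: "homogeneous_ideal G (hcore Q)"
  unfolding homogeneous_ideal_def
proof (intro conjI ballI allI impI)
  show "is_ideal (hcore Q)" by (rule ideal_hcore)
  fix b f i assume "b \<in> hcore Q" "graded_decomp G b f"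
  then have "hcomp G b i \<in> Q" "hcomp G b = f"
    unfolding hcore_def by (auto intro: hcomp_unique)
  then show "f i \<in> hcore Q"
    using homogeneous_in_hcore[OF hcomp_in_degree] by blast
qed

lemma exists_top_truncation:
  assumes "a \<notin> hcore Q"
  obtains a' m where "a - a' \<in> hcore Q" "hsupp G a' \<subseteq> {..m}" "hcomp G a' m \<notin> Q"
proof -
  define T where "T = {i. hcomp G a i \<notin> Q}"
  have "T \<subseteq> hsupp G a" unfolding T_def hsupp_def using ideal_zero[OF Q] by auto
  then have T: "finite T" "T \<noteq> {}"
    using finite_subset[OF _ finite_hsupp] assms unfolding T_def hcore_def by auto
  define a' where "a' = (\<Sum>i\<in>T. hcomp G a i)"
  have a': "hcomp G a' k = (if k \<in> T then hcomp G a k else 0)" for k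
    unfolding a'_def using T(1)
    by (simp add: hcomp_sum hcomp_homogeneous[OF hcomp_in_degree] if_distrib[of "\<lambda>x. x = k"]
        sum.delta' eq_commute[of _ k] cong: if_cong)
  show thesis
  proof
    show "a - a' \<in> hcore Q"
      unfolding hcore_def by (simp add: hcomp_diff a' T_def ideal_zero[OF Q])
    show "hsupp G a' \<subseteq> {..Max T}"
      unfolding hsupp_def a' using T by auto
    show "hcomp G a' (Max T) \<notin> Q"
      using Max_in[OF T] unfolding a' T_def by simp
  qed
qed

end

lemma prime_hcore:
  assumes Q: "is_prime_ideal Q"
  shows "is_prime_ideal (hcore Q)"
  unfolding is_prime_ideal_def
proof (intro conjI allI impI)
  have Q_ideal: "is_ideal Q" using Q by (rule prime_ideal_is_ideal)
  show hcore: "is_ideal (hcore Q)" by (rule ideal_hcore[OF Q_ideal])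
  show "hcore Q \<noteq> UNIV" using hcore_subset[OF Q_ideal] prime_ideal_one[OF Q] by blast
  fix a b assume ab: "a * b \<in> hcore Q"
  show "a \<in> hcore Q \<or> b \<in> hcore Q"
  proof (rule ccontr)
    assume "\<not> (a \<in> hcore Q \<or> b \<in> hcore Q)"
    then obtain a' m b' n where a': "a - a' \<in> hcore Q" "hsupp G a' \<subseteq> {..m}" "hcomp G a' m \<notin> Q"
      and b': "b - b' \<in> hcore Q" "hsupp G b' \<subseteq> {..n}" "hcomp G b' n \<notin> Q"
      by (metis exists_top_truncation[OF Q_ideal])
    have "a' * b' = a * b - (a - a') * b - a' * (b - b')" by (simp add: algebra_simps)
    also have "\<dots> \<in> hcore Q"
      using ab a'(1) b'(1) hcore by (simp add: ideal_diff ideal_mult_left ideal_mult_right)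
    finally have "hcomp G (a' * b') (m + n) \<in> Q" unfolding hcore_def by blast
    then show False
      using hcomp_mult_top[OF a'(2) b'(2)] prime_ideal_mult[OF Q] a'(3) b'(3) by auto
  qed
qed

lemma exists_homogeneous_height_one_prime:
  assumes noeth: "noetherian_ring TYPE('a)"
    and x: "x \<in> G d" "x \<noteq> 0" "\<not> x dvd 1"
  obtains P where "homogeneous_ideal G P" "height_one_prime P" "x \<in> P"
proof -
  obtain M where "is_prime_ideal M" "x \<in> M"
    using exists_prime_ideal[OF noeth x(3)] by blast
  then obtain P where P: "is_prime_ideal P" "x \<in> P"
    and min: "\<forall>Q. is_prime_ideal Q \<and> x \<in> Q \<and> Q \<subseteq> P \<longrightarrow> Q = P"
    using exists_minimal_prime by blast
  interpret minimal_prime_over P x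
  proof
    show "Q = P" if "is_prime_ideal Q" "x \<in> Q" "Q \<subseteq> P" for Q
      using min that by blast
  qed (fact noeth P)+
  have P_ideal: "is_ideal P" using P(1) by (rule prime_ideal_is_ideal)
  have "hcore P = P"
    by (rule minimal[OF prime_hcore[OF P(1)] homogeneous_in_hcore[OF P_ideal x(1) P(2)]
          hcore_subset[OF P_ideal]])
  then have "homogeneous_ideal G P"
    using homogeneous_ideal_hcore[OF P_ideal] by simp
  then show thesis using that height_one[OF x(2)] P(2) by blast
qed

definition concentrated :: "int \<Rightarrow> 'a set \<Rightarrow> 'a set" where
  "concentrated g P = {b. \<forall>k. \<not> g dvd k \<longrightarrow> hcomp G b k \<in> P}"

lemma homogeneous_in_concentrated:
  assumes "is_ideal P" "a \<in> G e" "g dvd e \<or> a \<in> P"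
  shows "a \<in> concentrated g P"
  using assms ideal_zero[OF assms(1)] unfolding concentrated_def by (auto simp: hcomp_homogeneous[OF assms(2)])

lemma subring_gen_subset_concentrated:
  assumes P: "is_prime_ideal P" and S: "S \<subseteq> concentrated g P"
  shows "subring_gen S \<subseteq> concentrated g P"
proof (rule subring_gen_least[OF S])
  have P_ideal: "is_ideal P" using P by (rule prime_ideal_is_ideal)
  show "0 \<in> concentrated g P" "1 \<in> concentrated g P"
    using homogeneous_in_concentrated[OF P_ideal zero_in_degree, of g 0]
      homogeneous_in_concentrated[OF P_ideal one_in_degree_zero, of g] by simp_all
  show "a + b \<in> concentrated g P" if "a \<in> concentrated g P" "b \<in> concentrated g P" for a b
    using that ideal_add[OF P_ideal] unfolding concentrated_def by (simp add: hcomp_add)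
  show "- a \<in> concentrated g P" if "a \<in> concentrated g P" for a
    using that ideal_uminus[OF P_ideal] unfolding concentrated_def by (simp add: hcomp_uminus)
  show "a * b \<in> concentrated g P" if ab: "a \<in> concentrated g P" "b \<in> concentrated g P" for a b
    unfolding concentrated_def
  proof (intro CollectI allI impI)
    fix k assume k: "\<not> g dvd k"
    have "(if i + j = k then hcomp G a i * hcomp G b j else 0) \<in> P" for i j
    proof (cases "i + j = k")
      case True
      then have "\<not> g dvd i \<or> \<not> g dvd j" using k by auto
      then show ?thesis
        using True ab ideal_mult_left[OF P_ideal] ideal_mult_right[OF P_ideal]
        unfolding concentrated_def by auto
    qed (simp add: ideal_zero[OF P_ideal])
    then show "hcomp G (a * b) k \<in> P"
      by (simp add: hcomp_mult[OF finite_hsupp subset_refl finite_hsupp subset_refl] ideal_sum[OF P_ideal])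
  qed
qed

lemma e_quot_zero: "e_quot G {0} = e_deg G"
proof -
  have "(\<not> G i \<subseteq> {0}) \<longleftrightarrow> G i \<noteq> {0}" for i using zero_in_degree[of i] by blast
  then show ?thesis unfolding e_quot_def e_deg_def by simp
qed

end

section \<open>Degrees of quotients by primes\<close>

locale graded_generators = graded G for G :: "int \<Rightarrow> 'a::idom set" +
  fixes x :: "nat \<Rightarrow> 'a" and d :: "nat \<Rightarrow> int" and I :: "nat set"
  assumes generated: "subring_gen (G 0 \<union> x ` I) = UNIV"
    and x_in_degree: "\<And>i. i \<in> I \<Longrightarrow> x i \<in> G (d i)"
begin

lemma hcomp_in_prime_off_degrees:
  assumes P: "is_prime_ideal P" and k: "\<not> Gcd (d ` {i\<in>I. x i \<notin> P}) dvd k"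
  shows "hcomp G b k \<in> P"
proof -
  let ?g = "Gcd (d ` {i\<in>I. x i \<notin> P})"
  have P_ideal: "is_ideal P" using P by (rule prime_ideal_is_ideal)
  have "G 0 \<union> x ` I \<subseteq> concentrated ?g P"
  proof
    fix a assume "a \<in> G 0 \<union> x ` I"
    then consider "a \<in> G 0" | i where "i \<in> I" "a = x i" by blast
    then show "a \<in> concentrated ?g P"
    proof cases
      case 1
      then show ?thesis by (rule homogeneous_in_concentrated[OF P_ideal]) simp
    next
      case 2
      have "?g dvd d i \<or> x i \<in> P" using 2(1) by (auto intro: Gcd_dvd)
      then show ?thesis
        unfolding 2(2) by (rule homogeneous_in_concentrated[OF P_ideal x_in_degree[OF 2(1)]])
    qed
  qed
  then have "b \<in> concentrated ?g P"
    using subring_gen_subset_concentrated[OF P] generated by blast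
  then show ?thesis using k unfolding concentrated_def by blast
qed

lemma e_quot_eq_Gcd_degrees:
  assumes P: "is_prime_ideal P"
  shows "e_quot G P = Gcd (d ` {i\<in>I. x i \<notin> P})"
proof (rule associated_eqI)
  show "e_quot G P dvd Gcd (d ` {i\<in>I. x i \<notin> P})"
  proof (rule Gcd_greatest)
    fix b assume "b \<in> d ` {i\<in>I. x i \<notin> P}"
    then obtain i where "i \<in> I" "x i \<notin> P" "b = d i" by blast
    then show "e_quot G P dvd b"
      unfolding e_quot_def using x_in_degree by (blast intro: Gcd_dvd)
  qed
  show "Gcd (d ` {i\<in>I. x i \<notin> P}) dvd e_quot G P"
    unfolding e_quot_def
  proof (rule Gcd_greatest)
    fix k assume "k \<in> {k. \<not> G k \<subseteq> P}"
    then obtain y where y: "y \<in> G k" "y \<notin> P" by blast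
    show "Gcd (d ` {i\<in>I. x i \<notin> P}) dvd k"
    proof (rule ccontr)
      assume "\<not> Gcd (d ` {i\<in>I. x i \<notin> P}) dvd k"
      then have "hcomp G y k \<in> P" by (rule hcomp_in_prime_off_degrees[OF P])
      then show False using y hcomp_homogeneous[OF y(1)] by simp
    qed
  qed
qed (simp_all add: e_quot_def)

lemma e_quot_dvd_degree:
  "is_prime_ideal P \<Longrightarrow> i \<in> I \<Longrightarrow> x i \<notin> P \<Longrightarrow> e_quot G P dvd d i"
  by (simp add: e_quot_eq_Gcd_degrees Gcd_dvd)

lemma prime_factors_Gcd_other_degrees_subset_Pi_set:
  assumes noeth: "noetherian_ring TYPE('a)" and i: "i \<in> I" "x i \<noteq> 0" "\<not> x i dvd 1"
  shows "prime_factors_int (Gcd (d ` (I - {i}))) \<subseteq> Pi_set G"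
proof
  fix p assume p: "p \<in> prime_factors_int (Gcd (d ` (I - {i})))"
  obtain P where P: "homogeneous_ideal G P" "height_one_prime P" "x i \<in> P"
    using exists_homogeneous_height_one_prime[OF noeth x_in_degree[OF i(1)] i(2,3)] by blast
  have "Gcd (d ` (I - {i})) dvd Gcd (d ` {j\<in>I. x j \<notin> P})"
    using P(3) by (intro Gcd_greatest) (auto intro: Gcd_dvd)
  also have "\<dots> = e_quot G P"
    using P(2) by (simp add: e_quot_eq_Gcd_degrees height_one_prime_def)
  finally show "p \<in> Pi_set G"
    using p P(1,2) unfolding prime_factors_int_def Pi_set_def by (blast intro: dvd_trans)
qed

lemma Pi_set_subset_prime_factors_Gcd_unit_degrees:
  "Pi_set G \<subseteq> prime_factors_int (Gcd (d ` {i\<in>I. x i dvd 1}))"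
proof
  fix p assume "p \<in> Pi_set G"
  then obtain P where P: "is_prime_ideal P" "int p dvd e_quot G P" and "prime p"
    unfolding Pi_set_def height_one_prime_def by blast
  have "e_quot G P dvd Gcd (d ` {i\<in>I. x i dvd 1})"
    using e_quot_dvd_degree[OF P(1)] prime_ideal_unit[OF P(1)] by (auto intro: Gcd_greatest)
  then show "p \<in> prime_factors_int (Gcd (d ` {i\<in>I. x i dvd 1}))"
    using P(2) \<open>prime p\<close> unfolding prime_factors_int_def by (blast intro: dvd_trans)
qed

lemma exists_generator_notin_prime:
  assumes P: "is_prime_ideal P" and "\<not> (\<Union>k\<in>- {0}. G k) \<subseteq> P"
  shows "\<exists>i\<in>I. x i \<notin> P"
proof (rule ccontr)
  assume "\<not> (\<exists>i\<in>I. x i \<notin> P)"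
  then have "{i\<in>I. x i \<notin> P} = {}" by blast
  then have "Gcd (d ` {i\<in>I. x i \<notin> P}) = 0" by (metis Gcd_empty image_empty)
  then have "e_quot G P = 0" by (simp add: e_quot_eq_Gcd_degrees[OF P])
  moreover obtain k y where "k \<in> - {0}" "y \<in> G k" "y \<notin> P"
    using assms(2) by (auto simp only: UN_subset_iff subset_iff)
  then have "e_quot G P dvd k" unfolding e_quot_def by (intro Gcd_dvd) blast
  ultimately show False using \<open>k \<in> - {0}\<close> by simp
qed

lemma Pi_set_subset_prime_factors_degree_prod:
  assumes "finite I" and no_irrelevant: "\<nexists>P. height_one_prime P \<and> (\<Union>k\<in>- {0}. G k) \<subseteq> P"
  shows "Pi_set G \<subseteq> prime_factors_int (\<Prod>i\<in>I. d i)"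
proof
  fix p assume "p \<in> Pi_set G"
  then obtain P where P: "height_one_prime P" "int p dvd e_quot G P" and "prime p"
    unfolding Pi_set_def by blast
  have P_prime: "is_prime_ideal P" using P(1) unfolding height_one_prime_def by blast
  have "\<not> (\<Union>k\<in>- {0}. G k) \<subseteq> P" using no_irrelevant P(1) by blast
  then obtain j where "j \<in> I" "x j \<notin> P"
    using exists_generator_notin_prime[OF P_prime] by blast
  then have "e_quot G P dvd (\<Prod>i\<in>I. d i)"
    using e_quot_dvd_degree[OF P_prime] dvd_prodI[OF \<open>finite I\<close>] by (blast intro: dvd_trans)
  then show "p \<in> prime_factors_int (\<Prod>i\<in>I. d i)"
    using P(2) \<open>prime p\<close> unfolding prime_factors_int_def by (blast intro: dvd_trans)
qed

lemma Pi_set_subset_prime_factors_Gcd_other_degrees: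
  assumes eB: "e_deg G = 1" and x_nonzero: "\<And>i. i \<in> I \<Longrightarrow> x i \<noteq> 0"
    and separated: "\<forall>i\<in>I. \<forall>j\<in>I. i \<noteq> j \<longrightarrow> \<not> (\<exists>P. height_one_prime P \<and> x i \<in> P \<and> x j \<in> P)"
  shows "Pi_set G \<subseteq> (\<Union>i\<in>{i\<in>I. \<not> x i dvd 1}. prime_factors_int (Gcd (d ` (I - {i}))))"
proof
  fix p assume "p \<in> Pi_set G"
  then obtain P where P: "height_one_prime P" "int p dvd e_quot G P" and "prime p"
    unfolding Pi_set_def by blast
  have P_prime: "is_prime_ideal P" using P(1) unfolding height_one_prime_def by blast
  show "p \<in> (\<Union>i\<in>{i\<in>I. \<not> x i dvd 1}. prime_factors_int (Gcd (d ` (I - {i}))))"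
  proof (cases "\<exists>i\<in>I. x i \<in> P")
    case False
    then have "{i\<in>I. x i \<notin> P} = {i\<in>I. x i \<notin> {0}}" using x_nonzero by auto
    then have "e_quot G P = e_quot G {0}"
      by (simp only: e_quot_eq_Gcd_degrees P_prime prime_ideal_zero)
    then have "int p dvd 1" using P(2) eB by (simp add: e_quot_zero)
    then show ?thesis using \<open>prime p\<close> by (simp add: prime_nat_iff)
  next
    case True
    then obtain i where i: "i \<in> I" "x i \<in> P" by blast
    then have "{j\<in>I. x j \<notin> P} = I - {i}" using separated P(1) by blast
    then have "e_quot G P = Gcd (d ` (I - {i}))" by (simp add: e_quot_eq_Gcd_degrees[OF P_prime])
    moreover have "\<not> x i dvd 1" using prime_ideal_unit[OF P_prime] i(2) by blast
    ultimately show ?thesis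
      using i(1) P(2) \<open>prime p\<close> unfolding prime_factors_int_def by auto
  qed
qed

end

lemma prime_factors_int_prod:
  "finite S \<Longrightarrow> prime_factors_int (\<Prod>i\<in>S. f i) = (\<Union>i\<in>S. prime_factors_int (f i))"
  unfolding prime_factors_int_def by (auto simp: prime_dvd_prod_iff)

theorem lemma3p13:
  fixes G :: "int \<Rightarrow> 'a::idom set"
    and x :: "nat \<Rightarrow> 'a" and d :: "nat \<Rightarrow> int" and n :: nat
    and ee :: "nat \<Rightarrow> int" and U Uc :: "nat set" and E :: "nat set"
  assumes grad: "graded_ring G"
    and noeth: "noetherian_ring TYPE('a)"
    and eB: "e_deg G = 1"
    and n2: "n \<ge> 2"
    and gen: "subring_gen (G 0 \<union> x ` {1..n}) = UNIV"
    and xnz: "\<forall>i\<in>{1..n}. x i \<noteq> 0"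
    and dnz: "\<forall>i\<in>{1..n}. d i \<noteq> 0"
    and xhom: "\<forall>i\<in>{1..n}. x i \<in> G (d i)"
    and ee_def: "\<forall>i\<in>{1..n}. ee i = Gcd (d ` ({1..n} - {i}))"
    and U_def: "U = {i\<in>{1..n}. x i dvd 1}"
    and Uc_def: "Uc = {1..n} - U"
    and E_def: "E = prime_factors_int (\<Prod>i\<in>Uc. ee i)"
  shows "E \<subseteq> Pi_set G \<and>
    (U \<noteq> {} \<longrightarrow> Pi_set G \<subseteq> prime_factors_int (Gcd (d ` U))) \<and>
    ((\<not> (\<exists>P. height_one_prime P \<and> (\<Union>i\<in>- {0}. G i) \<subseteq> P))
           \<longrightarrow> Pi_set G \<subseteq> prime_factors_int (\<Prod>i\<in>{1..n}. d i)) \<and>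
    ((\<forall>i\<in>{1..n}. \<forall>j\<in>{1..n}. i \<noteq> j \<longrightarrow>
            \<not> (\<exists>P. height_one_prime P \<and> x i \<in> P \<and> x j \<in> P))
           \<longrightarrow> Pi_set G = E)"
proof -
  interpret graded_generators G x d "{1..n}"
    using grad gen xhom by unfold_locales auto
  have Uc: "Uc = {i\<in>{1..n}. \<not> x i dvd 1}"
    unfolding Uc_def U_def by blast
  have E: "E = (\<Union>i\<in>Uc. prime_factors_int (Gcd (d ` ({1..n} - {i}))))"
    unfolding E_def Uc using ee_def by (simp add: prime_factors_int_prod)
  have part_a: "E \<subseteq> Pi_set G"
    unfolding E Uc using prime_factors_Gcd_other_degrees_subset_Pi_set[OF noeth] xnz by blast
  have part_b: "Pi_set G \<subseteq> prime_factors_int (Gcd (d ` U))"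
    unfolding U_def by (rule Pi_set_subset_prime_factors_Gcd_unit_degrees)
  have part_c: "Pi_set G \<subseteq> prime_factors_int (\<Prod>i\<in>{1..n}. d i)"
    if "\<not> (\<exists>P. height_one_prime P \<and> (\<Union>i\<in>- {0}. G i) \<subseteq> P)"
    using Pi_set_subset_prime_factors_degree_prod that by simp
  have part_d: "Pi_set G \<subseteq> E"
    if "\<forall>i\<in>{1..n}. \<forall>j\<in>{1..n}. i \<noteq> j \<longrightarrow> \<not> (\<exists>P. height_one_prime P \<and> x i \<in> P \<and> x j \<in> P)"
    unfolding E Uc using Pi_set_subset_prime_factors_Gcd_other_degrees[OF eB _ that] xnz by blast
  show ?thesis
    using part_a part_b part_c part_d by blast
qed

end
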